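(* Let $m\in\{1,2\}$, $K>0$, $\gamma=3$, and let $(\rho,u)$ be a smooth solution ($\rho>0$, $r>0$) of the radially symmetric isentropic Euler equations $$(r^m\rho)_t+(r^m\rho u)_r=0,\qquad (r^m\rho u)_t+(r^m\rho u^2)_r+r^m p_r=0,\qquad p=K\rho^\gamma,$$ in the supersonic inward regime $c_1<c_2<0$. Then: (i) If the 1-wave is rarefaction (R), the 2-wave can only change from R to compression (C); if the 2-wave is R, the 1-wave can only change from R to C. (ii) If the 1-wave is C, the 2-wave can only change from C to R; if the 2-wave is C, the 1-wave can only change from C to R.
   Context: Here $h=\sqrt{K\gamma}\,\rho^{(\gamma-1)/2}$, $c_1=u-h$, $c_2=u+h$, and $$\alpha=u_r+\tfrac{2}{\gamma-1}h_r+\tfrac{m}{r}\tfrac{hu}{c_2},\qquad \beta=u_r-\tfrac{2}{\gamma-1}h_r-\tfrac{m}{r}\tfrac{hu}{c_1}.$$ The 1-wave is rarefaction (compression) at a point if $\beta>0$ ($\beta<0$); the 2-wave is rarefaction (compression) if $\alpha>0$ ($\alpha<0$). Characteristic flow maps: $\partial_t\xi(r_0,t)=c_1(\xi(r_0,t),t)$, $\partial_t\psi(r_0,t)=c_2(\psi(r_0,t),t)$, $\xi(r_0,0)=\psi(r_0,0)=r_0$. A change of the 2-wave from C to R means there are $r_0,t^*,\varepsilon>0$ such that $g(t)=\alpha(\psi(r_0,t),t)$ satisfies $g(t^* )=0$, $g<0$ on $(t^*-\varepsilon,t^* )$, $g>0$ on $(t^*,t^*+\varepsilon)$ (from R to C: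 opposite signs); a change of the 1-wave is defined likewise with $\beta(\xi(r_0,t),t)$. "If the 1-wave is R then the 2-wave can only change from R to C" means no C-to-R change of the 2-wave occurs at a time $t^*$ where the 1-wave is R at the crossing point; the other items are interpreted analogously. *)

theory Defs
  imports "HOL-Analysis.Analysis"
begin

definition pr :: "(real \<times> real \<Rightarrow> real) \<Rightarrow> real \<times> real \<Rightarrow> real" where
  "pr f = (\<lambda>(r, t). deriv (\<lambda>s. f (s, t)) r)"

definition pt :: "(real \<times> real \<Rightarrow> real) \<Rightarrow> real \<times> real \<Rightarrow> real" where
  "pt f = (\<lambda>(r, t). deriv (\<lambda>s. f (r, s)) t)"

fun dpar :: "bool list \<Rightarrow> (real \<times> real \<Rightarrow> real) \<Rightarrow> real \<times> real \<Rightarrow> real" where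
  "dpar [] f = f"
| "dpar (b # bs) f = (if b then pr (dpar bs f) else pt (dpar bs f))"

definition smooth_on :: "(real \<times> real) set \<Rightarrow> (real \<times> real \<Rightarrow> real) \<Rightarrow> bool" where
  "smooth_on \<Omega> f \<longleftrightarrow> (\<forall>bs. dpar bs f differentiable_on \<Omega>)"

definition euler_solution ::
  "nat \<Rightarrow> real \<Rightarrow> real \<Rightarrow> (real \<times> real) set \<Rightarrow> (real \<times> real \<Rightarrow> real) \<Rightarrow> (real \<times> real \<Rightarrow> real) \<Rightarrow> bool" where
  "euler_solution m K \<gamma> \<Omega> \<rho> u \<longleftrightarrow>
     open \<Omega> \<and> (\<forall>z\<in>\<Omega>. fst z > 0 \<and> \<rho> z > 0) \<and> smooth_on \<Omega> \<rho> \<and> smooth_on \<Omega> u \<and>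
     (\<forall>z\<in>\<Omega>.
        pt (\<lambda>(r, t). r ^ m * \<rho> (r, t)) z + pr (\<lambda>(r, t). r ^ m * \<rho> (r, t) * u (r, t)) z = 0 \<and>
        pt (\<lambda>(r, t). r ^ m * \<rho> (r, t) * u (r, t)) z
          + pr (\<lambda>(r, t). r ^ m * \<rho> (r, t) * (u (r, t))\<^sup>2) z
          + (fst z) ^ m * pr (\<lambda>w. K * \<rho> w powr \<gamma>) z = 0)"

definition hh :: "real \<Rightarrow> real \<Rightarrow> (real \<times> real \<Rightarrow> real) \<Rightarrow> real \<times> real \<Rightarrow> real" where
  "hh K \<gamma> \<rho> = (\<lambda>z. sqrt (K * \<gamma>) * \<rho> z powr ((\<gamma> - 1) / 2))"

definition c1 :: "real \<Rightarrow> real \<Rightarrow> (real \<times> real \<Rightarrow> real) \<Rightarrow> (real \<times> real \<Rightarrow> real) \<Rightarrow> real \<times> real \<Rightarrow> real" where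
  "c1 K \<gamma> \<rho> u = (\<lambda>z. u z - hh K \<gamma> \<rho> z)"

definition c2 :: "real \<Rightarrow> real \<Rightarrow> (real \<times> real \<Rightarrow> real) \<Rightarrow> (real \<times> real \<Rightarrow> real) \<Rightarrow> real \<times> real \<Rightarrow> real" where
  "c2 K \<gamma> \<rho> u = (\<lambda>z. u z + hh K \<gamma> \<rho> z)"

definition alpha :: "nat \<Rightarrow> real \<Rightarrow> real \<Rightarrow> (real \<times> real \<Rightarrow> real) \<Rightarrow> (real \<times> real \<Rightarrow> real) \<Rightarrow> real \<times> real \<Rightarrow> real" where
  "alpha m K \<gamma> \<rho> u = (\<lambda>z. pr u z + 2 / (\<gamma> - 1) * pr (hh K \<gamma> \<rho>) z
      + real m / fst z * (hh K \<gamma> \<rho> z * u z / c2 K \<gamma> \<rho> u z))"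

definition beta :: "nat \<Rightarrow> real \<Rightarrow> real \<Rightarrow> (real \<times> real \<Rightarrow> real) \<Rightarrow> (real \<times> real \<Rightarrow> real) \<Rightarrow> real \<times> real \<Rightarrow> real" where
  "beta m K \<gamma> \<rho> u = (\<lambda>z. pr u z - 2 / (\<gamma> - 1) * pr (hh K \<gamma> \<rho>) z
      - real m / fst z * (hh K \<gamma> \<rho> z * u z / c1 K \<gamma> \<rho> u z))"

text \<open>psi is a characteristic curve of speed c on the time interval J, starting at r0
  at time 0 (i.e. t \<mapsto> psi t is the flow map t \<mapsto> psi(r0,t)), staying in the domain.\<close>
definition char_curve ::
  "(real \<times> real) set \<Rightarrow> (real \<times> real \<Rightarrow> real) \<Rightarrow> real set \<Rightarrow> real \<Rightarrow> (real \<Rightarrow> real) \<Rightarrow> bool" where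
  "char_curve \<Omega> c J r0 \<psi> \<longleftrightarrow> is_interval J \<and> 0 \<in> J \<and> \<psi> 0 = r0 \<and>
     (\<forall>t\<in>J. (\<psi> t, t) \<in> \<Omega> \<and> (\<psi> has_real_derivative c (\<psi> t, t)) (at t within J))"

definition change_C_to_R :: "(real \<Rightarrow> real) \<Rightarrow> real \<Rightarrow> real \<Rightarrow> bool" where
  "change_C_to_R g ts \<epsilon> \<longleftrightarrow> \<epsilon> > 0 \<and> g ts = 0 \<and>
     (\<forall>t\<in>{ts - \<epsilon><..<ts}. g t < 0) \<and> (\<forall>t\<in>{ts<..<ts + \<epsilon>}. g t > 0)"

definition change_R_to_C :: "(real \<Rightarrow> real) \<Rightarrow> real \<Rightarrow> real \<Rightarrow> bool" where
  "change_R_to_C g ts \<epsilon> \<longleftrightarrow> \<epsilon> > 0 \<and> g ts = 0 \<and>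
     (\<forall>t\<in>{ts - \<epsilon><..<ts}. g t > 0) \<and> (\<forall>t\<in>{ts<..<ts + \<epsilon>}. g t < 0)"

end

theory Submission
  imports Defs
begin

text \<open>For \<open>\<gamma> = 3\<close> the sound speed is \<open>h = c \<rho>\<close> with \<open>c = sqrt (3 K)\<close>, so the characteristic
  speeds \<open>W = u \<plusminus> c \<rho>\<close> are Riemann invariants in the strong sense: each solves a Burgers
  equation with source, \<open>W\<^sub>t + W W\<^sub>r = - m S / r\<close> with \<open>S = \<plusminus> c \<rho> u\<close>, and the gradient variables
  are \<open>\<alpha>, \<beta> = W\<^sub>r + m S / (r W)\<close>. Differentiating \<open>\<alpha>\<close> along a 2-characteristic at a point where
  \<open>\<alpha> = 0\<close>, the second derivatives of \<open>W\<close> cancel and one is left with \<open>m S\<^sub>t / (r W)\<close>; there the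
  continuity and momentum equations give \<open>S\<^sub>t = (u - c \<rho>)\<^sup>2 \<beta> / 2\<close>. In the supersonic inward regime
  \<open>r > 0 > W\<close>, so \<open>\<alpha>\<close> crosses zero with slope of sign \<open>- \<beta>\<close>: downwards (R to C) if \<open>\<beta> > 0\<close>,
  upwards if \<open>\<beta> < 0\<close>. Replacing \<open>c\<close> by \<open>- c\<close> exchanges the roles of the two waves.\<close>

section \<open>Partial derivatives in the plane\<close>

lemma pr_eqI: "((\<lambda>s. f (s, t)) has_real_derivative D) (at x) \<Longrightarrow> pr f (x, t) = D"
  unfolding pr_def by (simp add: DERIV_imp_deriv)

lemma pt_eqI: "((\<lambda>s. f (x, s)) has_real_derivative D) (at t) \<Longrightarrow> pt f (x, t) = D"
  unfolding pt_def by (simp add: DERIV_imp_deriv)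

lemma linear_real_pair:
  fixes D :: "real \<times> real \<Rightarrow> real"
  assumes "linear D"
  shows "D (a, b) = a * D (1, 0) + b * D (0, 1)"
proof -
  have "D (a, b) = D (a *\<^sub>R (1, 0) + b *\<^sub>R (0, 1))" by simp
  also have "\<dots> = a * D (1, 0) + b * D (0, 1)"
    using linear_add[OF assms, of "a *\<^sub>R (1, 0)" "b *\<^sub>R (0, 1)"]
      linear_scale[OF assms, of a "(1, 0)"] linear_scale[OF assms, of b "(0, 1)"] by simp
  finally show ?thesis .
qed

lemma has_real_derivative_compose_pair:
  fixes f :: "real \<times> real \<Rightarrow> real"
  assumes f: "(f has_derivative D) (at (p s, q s))"
    and p: "(p has_real_derivative p') (at s)" and q: "(q has_real_derivative q') (at s)"
  shows "((\<lambda>s. f (p s, q s)) has_real_derivative p' * D (1, 0) + q' * D (0, 1)) (at s)"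
proof -
  have "((\<lambda>s. (p s, q s)) has_derivative (\<lambda>h. (h * p', h * q'))) (at s)"
    using p q unfolding has_field_derivative_def by (auto intro!: derivative_eq_intros simp: mult.commute)
  from has_derivative_compose[OF this f]
  have "((\<lambda>s. f (p s, q s)) has_derivative (\<lambda>h. D (h * p', h * q'))) (at s)" by (simp add: o_def)
  moreover have "(\<lambda>h. D (h * p', h * q')) = (*) (p' * D (1, 0) + q' * D (0, 1))"
    by (rule ext, subst linear_real_pair[OF has_derivative_linear[OF f]]) (simp add: algebra_simps)
  ultimately show ?thesis by (simp add: has_field_derivative_def)
qed

lemma pr_eq_derivative:
  assumes "(f has_derivative D) (at (x, t))"
  shows "pr f (x, t) = D (1, 0)"
  using has_real_derivative_compose_pair[where p = "\<lambda>s. s" and q = "\<lambda>_. t", OF assms DERIV_ident DERIV_const]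
  by (simp add: pr_eqI)

lemma pt_eq_derivative:
  assumes "(f has_derivative D) (at (x, t))"
  shows "pt f (x, t) = D (0, 1)"
  using has_real_derivative_compose_pair[where p = "\<lambda>_. x" and q = "\<lambda>s. s", OF assms DERIV_const DERIV_ident]
  by (simp add: pt_eqI)

lemma has_real_derivative_along:
  fixes f :: "real \<times> real \<Rightarrow> real"
  assumes "f differentiable at (p s, q s)"
    and "(p has_real_derivative p') (at s)" and "(q has_real_derivative q') (at s)"
  shows "((\<lambda>s. f (p s, q s)) has_real_derivative p' * pr f (p s, q s) + q' * pt f (p s, q s)) (at s)"
proof -
  obtain D where D: "(f has_derivative D) (at (p s, q s))"
    using assms(1) unfolding differentiable_def by blast
  show ?thesis
    using has_real_derivative_compose_pair[OF D assms(2,3)]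
    unfolding pr_eq_derivative[OF D] pt_eq_derivative[OF D] .
qed

lemma has_real_derivative_pr:
  assumes "f differentiable at (x, t)"
  shows "((\<lambda>s. f (s, t)) has_real_derivative pr f (x, t)) (at x)"
  using has_real_derivative_along[where p = "\<lambda>s. s" and q = "\<lambda>_. t", OF assms DERIV_ident DERIV_const]
  by simp

lemma has_real_derivative_pt:
  assumes "f differentiable at (x, t)"
  shows "((\<lambda>s. f (x, s)) has_real_derivative pt f (x, t)) (at t)"
  using has_real_derivative_along[where p = "\<lambda>_. x" and q = "\<lambda>s. s", OF assms DERIV_const DERIV_ident]
  by simp

lemma pr_eq_on_open:
  assumes "open \<Omega>" "(x, t) \<in> \<Omega>" "\<And>z. z \<in> \<Omega> \<Longrightarrow> f z = g z"
  shows "pr f (x, t) = pr g (x, t)"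
proof -
  have "open ((\<lambda>s. (s, t)) -` \<Omega>)"
    using assms(1) by (intro continuous_open_vimage) (auto intro!: continuous_intros)
  moreover have "x \<in> (\<lambda>s. (s, t)) -` \<Omega>" using assms(2) by simp
  ultimately have "eventually (\<lambda>s. (s, t) \<in> \<Omega>) (nhds x)"
    using eventually_nhds_in_open by fastforce
  then have "eventually (\<lambda>s. f (s, t) = g (s, t)) (nhds x)"
    by (rule eventually_mono) (use assms(3) in auto)
  then show ?thesis unfolding pr_def by (simp add: deriv_cong_ev)
qed

lemma pt_eq_on_open:
  assumes "open \<Omega>" "(x, t) \<in> \<Omega>" "\<And>z. z \<in> \<Omega> \<Longrightarrow> f z = g z"
  shows "pt f (x, t) = pt g (x, t)"
proof -
  have "open ((\<lambda>s. (x, s)) -` \<Omega>)"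
    using assms(1) by (intro continuous_open_vimage) (auto intro!: continuous_intros)
  moreover have "t \<in> (\<lambda>s. (x, s)) -` \<Omega>" using assms(2) by simp
  ultimately have "eventually (\<lambda>s. (x, s) \<in> \<Omega>) (nhds t)"
    using eventually_nhds_in_open by fastforce
  then have "eventually (\<lambda>s. f (x, s) = g (x, s)) (nhds t)"
    by (rule eventually_mono) (use assms(3) in auto)
  then show ?thesis unfolding pt_def by (simp add: deriv_cong_ev)
qed

lemma dpar_pr: "dpar bs (pr f) = dpar (bs @ [True]) f"
  by (induction bs) auto

lemma dpar_pt: "dpar bs (pt f) = dpar (bs @ [False]) f"
  by (induction bs) auto

lemma smooth_on_pr: "smooth_on \<Omega> f \<Longrightarrow> smooth_on \<Omega> (pr f)"
  unfolding smooth_on_def by (simp add: dpar_pr)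

lemma smooth_on_pt: "smooth_on \<Omega> f \<Longrightarrow> smooth_on \<Omega> (pt f)"
  unfolding smooth_on_def by (simp add: dpar_pt)

lemma smooth_on_dpar_differentiable_at:
  "smooth_on \<Omega> f \<Longrightarrow> open \<Omega> \<Longrightarrow> z \<in> \<Omega> \<Longrightarrow> dpar bs f differentiable at z"
  using differentiable_on_eq_differentiable_at unfolding smooth_on_def by blast

lemma smooth_on_differentiable_at:
  "smooth_on \<Omega> f \<Longrightarrow> open \<Omega> \<Longrightarrow> z \<in> \<Omega> \<Longrightarrow> f differentiable at z"
  using smooth_on_dpar_differentiable_at[of \<Omega> f z "[]"] by simp

lemma pr_add_scaled:
  assumes "f differentiable at (x, t)" "g differentiable at (x, t)"
  shows "pr (\<lambda>z. f z + c * g z) (x, t) = pr f (x, t) + c * pr g (x, t)"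
  using assms by (intro pr_eqI) (auto intro!: derivative_eq_intros has_real_derivative_pr)

lemma pt_add_scaled:
  assumes "f differentiable at (x, t)" "g differentiable at (x, t)"
  shows "pt (\<lambda>z. f z + c * g z) (x, t) = pt f (x, t) + c * pt g (x, t)"
  using assms by (intro pt_eqI) (auto intro!: derivative_eq_intros has_real_derivative_pt)

lemma smooth_on_add_scaled:
  assumes f: "smooth_on \<Omega> f" and g: "smooth_on \<Omega> g" and \<Omega>: "open \<Omega>"
  shows "smooth_on \<Omega> (\<lambda>z. f z + c * g z)"
proof -
  have dpar: "dpar bs (\<lambda>z. f z + c * g z) z = dpar bs f z + c * dpar bs g z" if "z \<in> \<Omega>" for bs z
    using that
  proof (induction bs arbitrary: z)
    case (Cons b bs)
    obtain x t where z: "z = (x, t)" by fastforce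
    have df: "dpar bs f differentiable at (x, t)" and dg: "dpar bs g differentiable at (x, t)"
      using f g \<Omega> Cons.prems smooth_on_dpar_differentiable_at unfolding z by blast+
    have IH: "\<And>z. z \<in> \<Omega> \<Longrightarrow> dpar bs (\<lambda>z. f z + c * g z) z = dpar bs f z + c * dpar bs g z"
      using Cons.IH .
    show ?case
    proof (cases b)
      case True
      have "pr (dpar bs (\<lambda>z. f z + c * g z)) (x, t) = pr (\<lambda>z. dpar bs f z + c * dpar bs g z) (x, t)"
        using \<Omega> Cons.prems IH unfolding z by (rule pr_eq_on_open)
      with True show ?thesis unfolding z by (simp add: pr_add_scaled[OF df dg])
    next
      case False
      have "pt (dpar bs (\<lambda>z. f z + c * g z)) (x, t) = pt (\<lambda>z. dpar bs f z + c * dpar bs g z) (x, t)"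
        using \<Omega> Cons.prems IH unfolding z by (rule pt_eq_on_open)
      with False show ?thesis unfolding z by (simp add: pt_add_scaled[OF df dg])
    qed
  qed simp
  have "dpar bs (\<lambda>z. f z + c * g z) differentiable at z" if "z \<in> \<Omega>" for bs z
  proof -
    have "(\<lambda>z. dpar bs f z + c * dpar bs g z) differentiable at z"
      using f g \<Omega> that smooth_on_dpar_differentiable_at by (intro derivative_intros) blast+
    then obtain D where "((\<lambda>z. dpar bs f z + c * dpar bs g z) has_derivative D) (at z)"
      unfolding differentiable_def by blast
    then have "(dpar bs (\<lambda>z. f z + c * g z) has_derivative D) (at z)"
      by (rule has_derivative_transform_within_open[OF _ \<Omega> that]) (simp add: dpar)
    then show ?thesis unfolding differentiable_def by blast
  qed
  then show ?thesis
    unfolding smooth_on_def using \<Omega> differentiable_on_eq_differentiable_at by blast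
qed

section \<open>Symmetry of mixed partial derivatives\<close>

lemma pr_swap: "pr (\<lambda>z. f (snd z, fst z)) = (\<lambda>z. pt f (snd z, fst z))"
  by (auto simp: pr_def pt_def)

lemma pt_swap: "pt (\<lambda>z. f (snd z, fst z)) = (\<lambda>z. pr f (snd z, fst z))"
  by (auto simp: pr_def pt_def)

lemma differentiable_at_swap:
  fixes f :: "real \<times> real \<Rightarrow> real" and a b :: real
  assumes "f differentiable at (b, a)"
  shows "(\<lambda>z. f (snd z, fst z)) differentiable at (a, b)"
proof -
  have "((\<lambda>z::real \<times> real. (snd z, fst z)) has_derivative (\<lambda>z. (snd z, fst z))) (at (a, b))"
    by (auto intro!: derivative_eq_intros)
  then have "(\<lambda>z::real \<times> real. (snd z, fst z)) differentiable at (a, b)"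
    unfolding differentiable_def by blast
  from differentiable_chain_at[OF this] assms show ?thesis by (simp add: o_def)
qed

lemma second_difference_pt_pr:
  fixes f :: "real \<times> real \<Rightarrow> real"
  assumes h: "h > 0"
    and diff: "\<And>a b. a \<in> {x..x + h} \<Longrightarrow> b \<in> {t..t + h} \<Longrightarrow>
      f differentiable at (a, b) \<and> pr f differentiable at (a, b)"
  shows "\<exists>\<sigma>\<in>{x<..<x + h}. \<exists>\<tau>\<in>{t<..<t + h}.
    f (x + h, t + h) - f (x + h, t) - f (x, t + h) + f (x, t) = h\<^sup>2 * pt (pr f) (\<sigma>, \<tau>)"
proof -
  have "\<exists>\<sigma>. x < \<sigma> \<and> \<sigma> < x + h \<and> f (x + h, t + h) - f (x + h, t) - (f (x, t + h) - f (x, t))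
      = (x + h - x) * (pr f (\<sigma>, t + h) - pr f (\<sigma>, t))"
    by (rule MVT2[where f = "\<lambda>s. f (s, t + h) - f (s, t)"])
      (use h diff in \<open>auto intro!: derivative_intros has_real_derivative_pr\<close>)
  then obtain \<sigma> where \<sigma>: "x < \<sigma>" "\<sigma> < x + h"
    and "f (x + h, t + h) - f (x + h, t) - (f (x, t + h) - f (x, t))
      = h * (pr f (\<sigma>, t + h) - pr f (\<sigma>, t))"
    by auto
  moreover have "\<exists>\<tau>. t < \<tau> \<and> \<tau> < t + h \<and>
      pr f (\<sigma>, t + h) - pr f (\<sigma>, t) = (t + h - t) * pt (pr f) (\<sigma>, \<tau>)"
    by (rule MVT2[where f = "\<lambda>s. pr f (\<sigma>, s)"]) (use h diff \<sigma> in \<open>auto intro!: has_real_derivative_pt\<close>)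
  then obtain \<tau> where "t < \<tau>" "\<tau> < t + h"
    and "pr f (\<sigma>, t + h) - pr f (\<sigma>, t) = h * pt (pr f) (\<sigma>, \<tau>)"
    by auto
  ultimately show ?thesis
    by (intro bexI[of _ \<sigma>] bexI[of _ \<tau>]) (auto simp: power2_eq_square algebra_simps)
qed

lemma second_difference_pr_pt:
  fixes f :: "real \<times> real \<Rightarrow> real"
  assumes h: "h > 0"
    and diff: "\<And>a b. a \<in> {x..x + h} \<Longrightarrow> b \<in> {t..t + h} \<Longrightarrow>
      f differentiable at (a, b) \<and> pt f differentiable at (a, b)"
  shows "\<exists>\<sigma>\<in>{x<..<x + h}. \<exists>\<tau>\<in>{t<..<t + h}.
    f (x + h, t + h) - f (x + h, t) - f (x, t + h) + f (x, t) = h\<^sup>2 * pr (pt f) (\<sigma>, \<tau>)"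
proof -
  let ?g = "\<lambda>z. f (snd z, fst z)"
  have "\<exists>\<tau>\<in>{t<..<t + h}. \<exists>\<sigma>\<in>{x<..<x + h}.
    ?g (t + h, x + h) - ?g (t + h, x) - ?g (t, x + h) + ?g (t, x) = h\<^sup>2 * pt (pr ?g) (\<tau>, \<sigma>)"
    by (rule second_difference_pt_pr[OF h])
      (use diff in \<open>auto simp: pr_swap intro!: differentiable_at_swap\<close>)
  then show ?thesis unfolding pr_swap pt_swap by (auto simp: algebra_simps)
qed

lemma pt_pr_eq_pr_pt_nearby:
  fixes f :: "real \<times> real \<Rightarrow> real"
  assumes \<Omega>: "open \<Omega>" "(x, t) \<in> \<Omega>"
    and diff: "\<And>z. z \<in> \<Omega> \<Longrightarrow>
      f differentiable at z \<and> pr f differentiable at z \<and> pt f differentiable at z"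
    and "d > 0"
  shows "\<exists>p q. dist p (x, t) < d \<and> dist q (x, t) < d \<and> pt (pr f) p = pr (pt f) q"
proof -
  obtain \<delta> where "\<delta> > 0" and \<delta>: "ball (x, t) \<delta> \<subseteq> \<Omega>"
    using \<Omega> open_contains_ball by blast
  define h where "h = min d \<delta> / 4"
  have h: "h > 0" using \<open>d > 0\<close> \<open>\<delta> > 0\<close> by (simp add: h_def)
  have square: "dist (a, b) (x, t) < min d \<delta>" if "a \<in> {x..x + h}" "b \<in> {t..t + h}" for a b
  proof -
    have "dist (a, b) (x, t) \<le> \<bar>a - x\<bar> + \<bar>b - t\<bar>"
      using sqrt_sum_squares_le_sum_abs[of "a - x" "b - t"] by (simp add: dist_Pair_Pair dist_real_def)
    also have "\<dots> \<le> 2 * h" using that by simp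
    also have "\<dots> < min d \<delta>" using \<open>d > 0\<close> \<open>\<delta> > 0\<close> by (auto simp: h_def min_def)
    finally show ?thesis .
  qed
  have diff_square: "f differentiable at (a, b) \<and> pr f differentiable at (a, b) \<and> pt f differentiable at (a, b)"
    if "a \<in> {x..x + h}" "b \<in> {t..t + h}" for a b
    using diff \<delta> square[OF that] by (auto simp: dist_commute)
  obtain \<sigma> \<tau> where "\<sigma> \<in> {x<..<x + h}" "\<tau> \<in> {t<..<t + h}"
    and \<Delta>1: "f (x + h, t + h) - f (x + h, t) - f (x, t + h) + f (x, t) = h\<^sup>2 * pt (pr f) (\<sigma>, \<tau>)"
    using second_difference_pt_pr[OF h] diff_square by blast
  moreover obtain \<sigma>' \<tau>' where "\<sigma>' \<in> {x<..<x + h}" "\<tau>' \<in> {t<..<t + h}"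
    and \<Delta>2: "f (x + h, t + h) - f (x + h, t) - f (x, t + h) + f (x, t) = h\<^sup>2 * pr (pt f) (\<sigma>', \<tau>')"
    using second_difference_pr_pt[OF h] diff_square by blast
  moreover have "pt (pr f) (\<sigma>, \<tau>) = pr (pt f) (\<sigma>', \<tau>')"
    using \<Delta>1 \<Delta>2 h by simp
  ultimately show ?thesis
    using square by (intro exI[of _ "(\<sigma>, \<tau>)"] exI[of _ "(\<sigma>', \<tau>')"]) fastforce
qed

lemma pt_pr_eq_pr_pt:
  fixes f :: "real \<times> real \<Rightarrow> real"
  assumes \<Omega>: "open \<Omega>" "(x, t) \<in> \<Omega>"
    and diff: "\<And>z. z \<in> \<Omega> \<Longrightarrow>
      f differentiable at z \<and> pr f differentiable at z \<and> pt f differentiable at z"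
    and cont: "isCont (pt (pr f)) (x, t)" "isCont (pr (pt f)) (x, t)"
  shows "pt (pr f) (x, t) = pr (pt f) (x, t)"
proof (rule ccontr)
  define e where "e = dist (pt (pr f) (x, t)) (pr (pt f) (x, t)) / 2"
  assume "pt (pr f) (x, t) \<noteq> pr (pt f) (x, t)"
  then have "e > 0" by (simp add: e_def)
  obtain d1 where "d1 > 0" and d1: "\<And>p. dist p (x, t) < d1 \<Longrightarrow> dist (pt (pr f) p) (pt (pr f) (x, t)) < e"
    using cont(1) \<open>e > 0\<close> unfolding continuous_at_eps_delta by blast
  obtain d2 where "d2 > 0" and d2: "\<And>q. dist q (x, t) < d2 \<Longrightarrow> dist (pr (pt f) q) (pr (pt f) (x, t)) < e"
    using cont(2) \<open>e > 0\<close> unfolding continuous_at_eps_delta by blast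
  obtain p q where p: "dist p (x, t) < min d1 d2" and q: "dist q (x, t) < min d1 d2"
    and pq: "pt (pr f) p = pr (pt f) q"
    using pt_pr_eq_pr_pt_nearby[OF \<Omega> diff] \<open>d1 > 0\<close> \<open>d2 > 0\<close> by (metis min_less_iff_conj)
  have "dist (pt (pr f) p) (pt (pr f) (x, t)) < e" "dist (pr (pt f) q) (pr (pt f) (x, t)) < e"
    using d1 p d2 q by simp_all
  moreover have "dist (pt (pr f) (x, t)) (pr (pt f) (x, t))
      \<le> dist (pt (pr f) p) (pt (pr f) (x, t)) + dist (pr (pt f) q) (pr (pt f) (x, t))"
    using dist_triangle3[of "pt (pr f) (x, t)" "pr (pt f) (x, t)" "pt (pr f) p"] pq by simp
  ultimately show False by (simp add: e_def)
qed

lemma smooth_on_pt_pr_eq_pr_pt: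
  assumes "smooth_on \<Omega> f" "open \<Omega>" "(x, t) \<in> \<Omega>"
  shows "pt (pr f) (x, t) = pr (pt f) (x, t)"
proof (rule pt_pr_eq_pr_pt[OF assms(2,3)])
  show "f differentiable at z \<and> pr f differentiable at z \<and> pt f differentiable at z" if "z \<in> \<Omega>" for z
    using assms that smooth_on_differentiable_at smooth_on_pr smooth_on_pt by blast
  show "isCont (pt (pr f)) (x, t)" "isCont (pr (pt f)) (x, t)"
    using assms smooth_on_differentiable_at smooth_on_pr smooth_on_pt differentiable_imp_continuous_within
    by blast+
qed

section \<open>Burgers equation with source along its characteristics\<close>

definition char_gradient :: "real \<Rightarrow> (real \<times> real \<Rightarrow> real) \<Rightarrow> (real \<times> real \<Rightarrow> real) \<Rightarrow> real \<times> real \<Rightarrow> real"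
  where "char_gradient m W S z = pr W z + m * S z / (fst z * W z)"

lemma has_real_derivative_char_gradient:
  fixes W S :: "real \<times> real \<Rightarrow> real" and \<psi> :: "real \<Rightarrow> real"
  assumes \<Omega>: "open \<Omega>" and W: "smooth_on \<Omega> W" and S: "\<forall>z\<in>\<Omega>. S differentiable at z"
    and burgers: "\<forall>z\<in>\<Omega>. pt W z = - W z * pr W z - m * S z / fst z"
    and z: "(\<psi> t, t) \<in> \<Omega>" "\<psi> t \<noteq> 0" "W (\<psi> t, t) \<noteq> 0"
    and \<psi>: "(\<psi> has_real_derivative W (\<psi> t, t)) (at t)"
    and zero: "char_gradient m W S (\<psi> t, t) = 0"
  shows "((\<lambda>s. char_gradient m W S (\<psi> s, s)) has_real_derivative
    m * pt S (\<psi> t, t) / (\<psi> t * W (\<psi> t, t))) (at t)"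
proof -
  define x where "x = \<psi> t"
  have zx: "(x, t) \<in> \<Omega>" "x \<noteq> 0" "W (x, t) \<noteq> 0" and \<psi>x: "(\<psi> has_real_derivative W (x, t)) (at t)"
    using z \<psi> by (simp_all add: x_def)
  have along: "((\<lambda>s. f (\<psi> s, s)) has_real_derivative W (x, t) * pr f (x, t) + pt f (x, t)) (at t)"
    if "f differentiable at (x, t)" for f
    using has_real_derivative_along[where q = "\<lambda>s. s", OF _ \<psi> DERIV_ident] that by (simp add: x_def)
  have dW: "W differentiable at (x, t)" "pr W differentiable at (x, t)" "pr (pr W) differentiable at (x, t)"
    using W \<Omega> zx smooth_on_differentiable_at smooth_on_pr by blast+
  have dS: "S differentiable at (x, t)" using S zx by blast
  have Wt: "pt W (x, t) = - W (x, t) * pr W (x, t) - m * S (x, t) / x"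
    using burgers zx by simp
  have "pt (pr W) (x, t) = pr (\<lambda>z. - W z * pr W z - m * S z / fst z) (x, t)"
    using smooth_on_pt_pr_eq_pr_pt[OF W \<Omega> zx(1)] pr_eq_on_open[OF \<Omega> zx(1), of "pt W"] burgers by simp
  also have "\<dots> = - (pr W (x, t))\<^sup>2 - W (x, t) * pr (pr W) (x, t) - m * (pr S (x, t) / x - S (x, t) / x\<^sup>2)"
    using dW dS zx
    by (intro pr_eqI) (auto intro!: derivative_eq_intros has_real_derivative_pr simp: power2_eq_square field_simps)
  finally have Wrt: "pt (pr W) (x, t) = \<dots>" .
  have Wr: "pr W (x, t) = - m * S (x, t) / (x * W (x, t))"
    using zero zx by (simp add: char_gradient_def x_def field_simps)
  have "(W (x, t) * pr (pr W) (x, t) + pt (pr W) (x, t))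
      + m * ((W (x, t) * pr S (x, t) + pt S (x, t)) * (x * W (x, t))
        - S (x, t) * (W (x, t) * W (x, t) + x * (W (x, t) * pr W (x, t) + pt W (x, t))))
        / (x * W (x, t) * (x * W (x, t)))
      = m * pt S (x, t) / (x * W (x, t))" (is "?D = _")
    unfolding Wrt Wt using zx by (simp add: Wr field_simps power2_eq_square)
  moreover have "((\<lambda>s. pr W (\<psi> s, s) + m * S (\<psi> s, s) / (\<psi> s * W (\<psi> s, s))) has_real_derivative ?D) (at t)"
    using zx by (auto intro!: derivative_eq_intros along dW dS \<psi>x simp: x_def algebra_simps)
  ultimately show ?thesis unfolding char_gradient_def x_def by simp
qed

lemma change_R_to_C_iff_change_C_to_R_uminus:
  "change_R_to_C g ts \<epsilon> \<longleftrightarrow> change_C_to_R (\<lambda>t. - g t) ts \<epsilon>"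
  unfolding change_R_to_C_def change_C_to_R_def by auto

lemma DERIV_neg_not_change_C_to_R:
  assumes g: "(g has_real_derivative D) (at ts)" and "D < 0"
  shows "\<not> change_C_to_R g ts \<epsilon>"
proof
  assume change: "change_C_to_R g ts \<epsilon>"
  obtain d where "d > 0" and dec: "\<And>h. 0 < h \<Longrightarrow> h < d \<Longrightarrow> g (ts + h) < g ts"
    using DERIV_neg_dec_right[OF g \<open>D < 0\<close>] by blast
  define h where "h = min d \<epsilon> / 2"
  have "0 < h" "h < d" "h < \<epsilon>"
    using \<open>d > 0\<close> change unfolding h_def change_C_to_R_def by auto
  then have "g (ts + h) < 0" and "g (ts + h) > 0"
    using dec[of h] change unfolding change_C_to_R_def by auto
  then show False by simp
qed

lemma DERIV_pos_not_change_R_to_C: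
  "(g has_real_derivative D) (at ts) \<Longrightarrow> D > 0 \<Longrightarrow> \<not> change_R_to_C g ts \<epsilon>"
  unfolding change_R_to_C_iff_change_C_to_R_uminus
  by (rule DERIV_neg_not_change_C_to_R[where D = "- D"]) (auto intro: derivative_intros)

lemma char_curve_cong:
  "(\<And>z. z \<in> \<Omega> \<Longrightarrow> c z = c' z) \<Longrightarrow> char_curve \<Omega> c J r0 \<psi> \<longleftrightarrow> char_curve \<Omega> c' J r0 \<psi>"
  unfolding char_curve_def by auto

lemma change_C_to_R_cong:
  "(\<And>t. t \<in> {ts - \<epsilon><..<ts + \<epsilon>} \<Longrightarrow> f t = g t) \<Longrightarrow> change_C_to_R f ts \<epsilon> \<longleftrightarrow> change_C_to_R g ts \<epsilon>"
  unfolding change_C_to_R_def by (cases "\<epsilon> > 0") auto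

lemma change_R_to_C_cong:
  "(\<And>t. t \<in> {ts - \<epsilon><..<ts + \<epsilon>} \<Longrightarrow> f t = g t) \<Longrightarrow> change_R_to_C f ts \<epsilon> \<longleftrightarrow> change_R_to_C g ts \<epsilon>"
  unfolding change_R_to_C_def by (cases "\<epsilon> > 0") auto

lemma char_curve_has_real_derivative:
  assumes "char_curve \<Omega> c J r0 \<psi>" "ts \<in> interior J"
  shows "(\<psi> has_real_derivative c (\<psi> ts, ts)) (at ts)"
  using assms interior_subset at_within_interior unfolding char_curve_def by (metis subsetD)

lemma char_gradient_change_along_char_curve:
  fixes W S :: "real \<times> real \<Rightarrow> real"
  assumes \<Omega>: "open \<Omega>" and W: "smooth_on \<Omega> W" and S: "\<forall>z\<in>\<Omega>. S differentiable at z"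
    and burgers: "\<forall>z\<in>\<Omega>. pt W z = - W z * pr W z - m * S z / fst z"
    and inward: "\<forall>z\<in>\<Omega>. fst z > 0 \<and> W z < 0"
    and \<psi>: "char_curve \<Omega> W J r0 \<psi>" and J: "{ts - \<epsilon><..<ts + \<epsilon>} \<subseteq> J"
  shows "change_C_to_R (\<lambda>t. char_gradient m W S (\<psi> t, t)) ts \<epsilon> \<Longrightarrow> m * pt S (\<psi> ts, ts) \<le> 0"
    and "change_R_to_C (\<lambda>t. char_gradient m W S (\<psi> t, t)) ts \<epsilon> \<Longrightarrow> m * pt S (\<psi> ts, ts) \<ge> 0"
proof -
  have derivative: "((\<lambda>s. char_gradient m W S (\<psi> s, s)) has_real_derivative
      m * pt S (\<psi> ts, ts) / (\<psi> ts * W (\<psi> ts, ts))) (at ts)"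
    and sign: "\<psi> ts * W (\<psi> ts, ts) < 0"
    if "\<epsilon> > 0" "char_gradient m W S (\<psi> ts, ts) = 0"
  proof -
    have "ts \<in> interior J"
      using interior_maximal[OF J] \<open>\<epsilon> > 0\<close> by auto
    then have z: "(\<psi> ts, ts) \<in> \<Omega>" and d\<psi>: "(\<psi> has_real_derivative W (\<psi> ts, ts)) (at ts)"
      using \<psi> interior_subset char_curve_has_real_derivative unfolding char_curve_def by blast+
    have "\<psi> ts > 0" "W (\<psi> ts, ts) < 0"
      using inward z by auto
    then show "\<psi> ts * W (\<psi> ts, ts) < 0"
      by (rule mult_pos_neg)
    show "((\<lambda>s. char_gradient m W S (\<psi> s, s)) has_real_derivative
        m * pt S (\<psi> ts, ts) / (\<psi> ts * W (\<psi> ts, ts))) (at ts)"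
      using \<open>\<psi> ts > 0\<close> \<open>W (\<psi> ts, ts) < 0\<close>
      by (intro has_real_derivative_char_gradient[OF \<Omega> W S burgers z _ _ d\<psi> that(2)]) auto
  qed
  show "m * pt S (\<psi> ts, ts) \<le> 0" if change: "change_C_to_R (\<lambda>t. char_gradient m W S (\<psi> t, t)) ts \<epsilon>"
  proof (rule ccontr)
    assume "\<not> m * pt S (\<psi> ts, ts) \<le> 0"
    moreover have "\<epsilon> > 0" "char_gradient m W S (\<psi> ts, ts) = 0"
      using change unfolding change_C_to_R_def by auto
    ultimately show False
      using derivative sign DERIV_neg_not_change_C_to_R[OF _ divide_pos_neg] change by force
  qed
  show "m * pt S (\<psi> ts, ts) \<ge> 0" if change: "change_R_to_C (\<lambda>t. char_gradient m W S (\<psi> t, t)) ts \<epsilon>"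
  proof (rule ccontr)
    assume "\<not> m * pt S (\<psi> ts, ts) \<ge> 0"
    moreover have "\<epsilon> > 0" "char_gradient m W S (\<psi> ts, ts) = 0"
      using change unfolding change_R_to_C_def by auto
    ultimately show False
      using derivative sign DERIV_pos_not_change_R_to_C[OF _ divide_neg_neg] change by force
  qed
qed

section \<open>Radially symmetric Euler equations with \<open>\<gamma> = 3\<close>\<close>

lemma radial_euler_primitive_form:
  fixes m :: nat and \<rho> u :: "real \<times> real \<Rightarrow> real"
  assumes d\<rho>: "\<rho> differentiable at (x, t)" and du: "u differentiable at (x, t)"
    and pos: "x > 0" "\<rho> (x, t) > 0"
    and mass: "pt (\<lambda>(r, t). r ^ m * \<rho> (r, t)) (x, t) + pr (\<lambda>(r, t). r ^ m * \<rho> (r, t) * u (r, t)) (x, t) = 0"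
    and momentum: "pt (\<lambda>(r, t). r ^ m * \<rho> (r, t) * u (r, t)) (x, t)
      + pr (\<lambda>(r, t). r ^ m * \<rho> (r, t) * (u (r, t))\<^sup>2) (x, t) + x ^ m * p\<^sub>r = 0"
  shows "pt \<rho> (x, t) = - u (x, t) * pr \<rho> (x, t) - \<rho> (x, t) * pr u (x, t) - m * \<rho> (x, t) * u (x, t) / x"
    and "pt u (x, t) = - u (x, t) * pr u (x, t) - p\<^sub>r / \<rho> (x, t)"
proof -
  note derivs = has_real_derivative_pr[OF d\<rho>] has_real_derivative_pr[OF du]
    has_real_derivative_pt[OF d\<rho>] has_real_derivative_pt[OF du]
  have xm: "real m * x ^ (m - 1) * y = x ^ m * (real m * y / x)" for y
    using pos by (cases m) (auto simp: field_simps)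
  have "pt (\<lambda>(r, t). r ^ m * \<rho> (r, t)) (x, t) = x ^ m * pt \<rho> (x, t)"
    by (rule pt_eqI) (auto intro!: derivative_eq_intros derivs)
  moreover have "pr (\<lambda>(r, t). r ^ m * \<rho> (r, t) * u (r, t)) (x, t)
      = real m * x ^ (m - 1) * (\<rho> (x, t) * u (x, t)) + x ^ m * (pr \<rho> (x, t) * u (x, t) + \<rho> (x, t) * pr u (x, t))"
    by (rule pr_eqI) (auto intro!: derivative_eq_intros derivs simp: algebra_simps)
  ultimately have "x ^ m * (pt \<rho> (x, t) + u (x, t) * pr \<rho> (x, t) + \<rho> (x, t) * pr u (x, t)
      + m * \<rho> (x, t) * u (x, t) / x) = 0"
    using mass unfolding xm by (simp add: algebra_simps)
  then show \<rho>t: "pt \<rho> (x, t) = - u (x, t) * pr \<rho> (x, t) - \<rho> (x, t) * pr u (x, t) - m * \<rho> (x, t) * u (x, t) / x"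
    using pos by simp
  have "pt (\<lambda>(r, t). r ^ m * \<rho> (r, t) * u (r, t)) (x, t)
      = x ^ m * (pt \<rho> (x, t) * u (x, t) + \<rho> (x, t) * pt u (x, t))"
    by (rule pt_eqI) (auto intro!: derivative_eq_intros derivs simp: algebra_simps)
  moreover have "pr (\<lambda>(r, t). r ^ m * \<rho> (r, t) * (u (r, t))\<^sup>2) (x, t)
      = real m * x ^ (m - 1) * (\<rho> (x, t) * (u (x, t))\<^sup>2)
        + x ^ m * (pr \<rho> (x, t) * (u (x, t))\<^sup>2 + 2 * \<rho> (x, t) * u (x, t) * pr u (x, t))"
    by (rule pr_eqI) (auto intro!: derivative_eq_intros derivs simp: algebra_simps power2_eq_square)
  ultimately have "x ^ m * (\<rho> (x, t) * (pt u (x, t) + u (x, t) * pr u (x, t)) + p\<^sub>r) = 0"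
    using momentum unfolding \<rho>t xm using pos by (simp add: algebra_simps power2_eq_square)
  then have "\<rho> (x, t) * (pt u (x, t) + u (x, t) * pr u (x, t)) + p\<^sub>r = 0"
    using pos by simp
  then show "pt u (x, t) = - u (x, t) * pr u (x, t) - p\<^sub>r / \<rho> (x, t)"
    using pos by (simp add: field_simps)
qed

lemma pr_cubic_pressure:
  assumes "open \<Omega>" "(x, t) \<in> \<Omega>" "\<And>z. z \<in> \<Omega> \<Longrightarrow> \<rho> z > 0" "\<rho> differentiable at (x, t)"
  shows "pr (\<lambda>w. K * \<rho> w powr 3) (x, t) = 3 * K * (\<rho> (x, t))\<^sup>2 * pr \<rho> (x, t)"
proof -
  have "pr (\<lambda>w. K * \<rho> w powr 3) (x, t) = pr (\<lambda>w. K * \<rho> w ^ 3) (x, t)"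
    by (rule pr_eq_on_open[OF assms(1,2)]) (simp add: assms(3) less_imp_le)
  also have "\<dots> = 3 * K * (\<rho> (x, t))\<^sup>2 * pr \<rho> (x, t)"
    using assms(4) by (intro pr_eqI) (auto intro!: derivative_eq_intros has_real_derivative_pr)
  finally show ?thesis .
qed

definition euler3_primitive ::
  "real \<Rightarrow> real \<Rightarrow> (real \<times> real) set \<Rightarrow> (real \<times> real \<Rightarrow> real) \<Rightarrow> (real \<times> real \<Rightarrow> real) \<Rightarrow> bool"
  where "euler3_primitive m c \<Omega> \<rho> u \<longleftrightarrow>
    open \<Omega> \<and> (\<forall>z\<in>\<Omega>. fst z > 0) \<and> smooth_on \<Omega> \<rho> \<and> smooth_on \<Omega> u \<and>
    (\<forall>z\<in>\<Omega>. pt \<rho> z = - u z * pr \<rho> z - \<rho> z * pr u z - m * \<rho> z * u z / fst z \<and>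
      pt u z = - u z * pr u z - c\<^sup>2 * \<rho> z * pr \<rho> z)"

lemma euler_solution_imp_euler3_primitive:
  assumes sol: "euler_solution m K 3 \<Omega> \<rho> u" and c: "c\<^sup>2 = 3 * K"
  shows "euler3_primitive (real m) c \<Omega> \<rho> u"
  unfolding euler3_primitive_def
proof (intro conjI ballI)
  show \<Omega>: "open \<Omega>" and "smooth_on \<Omega> \<rho>" "smooth_on \<Omega> u" and pos: "\<And>z. z \<in> \<Omega> \<Longrightarrow> fst z > 0"
    using sol unfolding euler_solution_def by auto
  fix z assume "z \<in> \<Omega>"
  moreover obtain x t where z: "z = (x, t)" by fastforce
  ultimately have zx: "(x, t) \<in> \<Omega>" by simp
  have d: "\<rho> differentiable at (x, t)" "u differentiable at (x, t)"
    using \<Omega> zx \<open>smooth_on \<Omega> \<rho>\<close> \<open>smooth_on \<Omega> u\<close> smooth_on_differentiable_at by blast+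
  have \<rho>_pos: "\<And>z. z \<in> \<Omega> \<Longrightarrow> \<rho> z > 0" and "x > 0" "\<rho> (x, t) > 0"
    using sol zx unfolding euler_solution_def by auto
  have "pt (\<lambda>(r, t). r ^ m * \<rho> (r, t)) (x, t) + pr (\<lambda>(r, t). r ^ m * \<rho> (r, t) * u (r, t)) (x, t) = 0"
    and "pt (\<lambda>(r, t). r ^ m * \<rho> (r, t) * u (r, t)) (x, t) + pr (\<lambda>(r, t). r ^ m * \<rho> (r, t) * (u (r, t))\<^sup>2) (x, t)
      + x ^ m * (c\<^sup>2 * \<rho> (x, t) * (\<rho> (x, t) * pr \<rho> (x, t))) = 0"
    using sol zx pr_cubic_pressure[OF \<Omega> zx \<rho>_pos d(1), of K] c
    unfolding euler_solution_def by (auto simp: power2_eq_square mult.assoc)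
  from radial_euler_primitive_form[OF d \<open>x > 0\<close> \<open>\<rho> (x, t) > 0\<close> this]
  show "pt \<rho> z = - u z * pr \<rho> z - \<rho> z * pr u z - real m * \<rho> z * u z / fst z"
    "pt u z = - u z * pr u z - c\<^sup>2 * \<rho> z * pr \<rho> z"
    unfolding z using \<open>\<rho> (x, t) > 0\<close> by auto
qed

definition riemann_invariant :: "real \<Rightarrow> (real \<times> real \<Rightarrow> real) \<Rightarrow> (real \<times> real \<Rightarrow> real) \<Rightarrow> real \<times> real \<Rightarrow> real"
  where "riemann_invariant c \<rho> u z = u z + c * \<rho> z"

definition riemann_source :: "real \<Rightarrow> (real \<times> real \<Rightarrow> real) \<Rightarrow> (real \<times> real \<Rightarrow> real) \<Rightarrow> real \<times> real \<Rightarrow> real"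
  where "riemann_source c \<rho> u z = c * \<rho> z * u z"

lemma euler3_primitive_burgers:
  assumes E: "euler3_primitive m c \<Omega> \<rho> u" and z: "z \<in> \<Omega>"
  shows "pt (riemann_invariant c \<rho> u) z
    = - riemann_invariant c \<rho> u z * pr (riemann_invariant c \<rho> u) z - m * riemann_source c \<rho> u z / fst z"
proof -
  obtain x t where xt: "z = (x, t)" by fastforce
  have d: "\<rho> differentiable at (x, t)" "u differentiable at (x, t)"
    using E z smooth_on_differentiable_at unfolding euler3_primitive_def xt by blast+
  have "x > 0" and \<rho>t: "pt \<rho> (x, t) = - u (x, t) * pr \<rho> (x, t) - \<rho> (x, t) * pr u (x, t) - m * \<rho> (x, t) * u (x, t) / x"
    and ut: "pt u (x, t) = - u (x, t) * pr u (x, t) - c\<^sup>2 * \<rho> (x, t) * pr \<rho> (x, t)"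
    using E z unfolding euler3_primitive_def xt by auto
  show ?thesis
    unfolding riemann_invariant_def[abs_def] riemann_source_def xt pr_add_scaled[OF d(2,1)] pt_add_scaled[OF d(2,1)] \<rho>t ut
    using \<open>x > 0\<close> by (simp add: field_simps power2_eq_square)
qed

lemma euler3_primitive_pt_riemann_source:
  assumes E: "euler3_primitive m c \<Omega> \<rho> u" and z: "z \<in> \<Omega>"
    and nz: "riemann_invariant c \<rho> u z \<noteq> 0" "riemann_invariant (- c) \<rho> u z \<noteq> 0"
    and zero: "char_gradient m (riemann_invariant c \<rho> u) (riemann_source c \<rho> u) z = 0"
  shows "pt (riemann_source c \<rho> u) z = (riemann_invariant (- c) \<rho> u z)\<^sup>2 / 2
    * char_gradient m (riemann_invariant (- c) \<rho> u) (riemann_source (- c) \<rho> u) z"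
proof -
  obtain x t where xt: "z = (x, t)" by fastforce
  have d: "\<rho> differentiable at (x, t)" "u differentiable at (x, t)"
    using E z smooth_on_differentiable_at unfolding euler3_primitive_def xt by blast+
  have "x > 0" and \<rho>t: "pt \<rho> (x, t) = - u (x, t) * pr \<rho> (x, t) - \<rho> (x, t) * pr u (x, t) - m * \<rho> (x, t) * u (x, t) / x"
    and ut: "pt u (x, t) = - u (x, t) * pr u (x, t) - c\<^sup>2 * \<rho> (x, t) * pr \<rho> (x, t)"
    using E z unfolding euler3_primitive_def xt by auto
  have w: "u (x, t) + c * \<rho> (x, t) \<noteq> 0" "u (x, t) - c * \<rho> (x, t) \<noteq> 0"
    using nz unfolding xt riemann_invariant_def by auto
  have pr_riemann: "pr (riemann_invariant c' \<rho> u) (x, t) = pr u (x, t) + c' * pr \<rho> (x, t)" for c'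
    unfolding riemann_invariant_def[abs_def] by (rule pr_add_scaled[OF d(2,1)])
  have ur: "pr u (x, t) = - c * pr \<rho> (x, t) - m * (c * \<rho> (x, t) * u (x, t)) / (x * (u (x, t) + c * \<rho> (x, t)))"
    using zero \<open>x > 0\<close> w unfolding xt char_gradient_def pr_riemann
    by (simp add: riemann_invariant_def riemann_source_def field_simps)
  have "pt (riemann_source c \<rho> u) (x, t) = c * (pt \<rho> (x, t) * u (x, t) + \<rho> (x, t) * pt u (x, t))"
    unfolding riemann_source_def[abs_def]
    by (intro pt_eqI) (auto intro!: derivative_eq_intros has_real_derivative_pt d simp: algebra_simps)
  also have "\<dots> = (u (x, t) - c * \<rho> (x, t))\<^sup>2 / 2 * (pr u (x, t) - c * pr \<rho> (x, t)
      + m * (- c * \<rho> (x, t) * u (x, t)) / (x * (u (x, t) - c * \<rho> (x, t))))"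
    using \<open>x > 0\<close> w unfolding \<rho>t ut ur
    by (simp add: divide_simps) (simp add: algebra_simps power2_eq_square)
  finally show ?thesis
    unfolding xt char_gradient_def pr_riemann by (simp add: riemann_invariant_def riemann_source_def)
qed

lemma euler3_change_along_char_curve:
  assumes E: "euler3_primitive m c \<Omega> \<rho> u" and "m > 0"
    and inward: "\<forall>z\<in>\<Omega>. riemann_invariant c \<rho> u z < 0 \<and> riemann_invariant (- c) \<rho> u z < 0"
    and \<psi>: "char_curve \<Omega> (riemann_invariant c \<rho> u) J r0 \<psi>" and J: "{ts - \<epsilon><..<ts + \<epsilon>} \<subseteq> J"
  shows "change_C_to_R (\<lambda>t. char_gradient m (riemann_invariant c \<rho> u) (riemann_source c \<rho> u) (\<psi> t, t)) ts \<epsilon>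
      \<Longrightarrow> char_gradient m (riemann_invariant (- c) \<rho> u) (riemann_source (- c) \<rho> u) (\<psi> ts, ts) \<le> 0"
    and "change_R_to_C (\<lambda>t. char_gradient m (riemann_invariant c \<rho> u) (riemann_source c \<rho> u) (\<psi> t, t)) ts \<epsilon>
      \<Longrightarrow> char_gradient m (riemann_invariant (- c) \<rho> u) (riemann_source (- c) \<rho> u) (\<psi> ts, ts) \<ge> 0"
proof -
  let ?W = "riemann_invariant c \<rho> u" and ?S = "riemann_source c \<rho> u"
  let ?\<beta> = "char_gradient m (riemann_invariant (- c) \<rho> u) (riemann_source (- c) \<rho> u) (\<psi> ts, ts)"
  have \<Omega>: "open \<Omega>" and pos: "\<And>z. z \<in> \<Omega> \<Longrightarrow> fst z > 0" and sm: "smooth_on \<Omega> \<rho>" "smooth_on \<Omega> u"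
    using E unfolding euler3_primitive_def by auto
  have W: "smooth_on \<Omega> ?W"
    unfolding riemann_invariant_def[abs_def] using sm(2,1) \<Omega> by (rule smooth_on_add_scaled)
  have S: "\<forall>z\<in>\<Omega>. ?S differentiable at z"
    unfolding riemann_source_def[abs_def] using sm \<Omega> smooth_on_differentiable_at
    by (intro ballI derivative_intros) blast+
  have burgers: "\<forall>z\<in>\<Omega>. pt ?W z = - ?W z * pr ?W z - m * ?S z / fst z"
    using euler3_primitive_burgers[OF E] by blast
  have inward_W: "\<forall>z\<in>\<Omega>. fst z > 0 \<and> ?W z < 0"
    using pos inward by blast
  note change = char_gradient_change_along_char_curve[OF \<Omega> W S burgers inward_W \<psi> J]
  have source: "m * pt ?S (\<psi> ts, ts) = m * (riemann_invariant (- c) \<rho> u (\<psi> ts, ts))\<^sup>2 / 2 * ?\<beta>"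
    and factor: "m * (riemann_invariant (- c) \<rho> u (\<psi> ts, ts))\<^sup>2 / 2 > 0"
    if "\<epsilon> > 0" "char_gradient m ?W ?S (\<psi> ts, ts) = 0"
  proof -
    have "ts \<in> {ts - \<epsilon><..<ts + \<epsilon>}" using \<open>\<epsilon> > 0\<close> by simp
    then have z: "(\<psi> ts, ts) \<in> \<Omega>" using \<psi> subsetD[OF J] unfolding char_curve_def by blast
    have nz: "?W (\<psi> ts, ts) \<noteq> 0" "riemann_invariant (- c) \<rho> u (\<psi> ts, ts) \<noteq> 0"
      using inward z by auto
    show "m * pt ?S (\<psi> ts, ts) = m * (riemann_invariant (- c) \<rho> u (\<psi> ts, ts))\<^sup>2 / 2 * ?\<beta>"
      using euler3_primitive_pt_riemann_source[OF E z nz that(2)] by simp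
    show "m * (riemann_invariant (- c) \<rho> u (\<psi> ts, ts))\<^sup>2 / 2 > 0"
      using nz \<open>m > 0\<close> by simp
  qed
  show "?\<beta> \<le> 0" if ch: "change_C_to_R (\<lambda>t. char_gradient m ?W ?S (\<psi> t, t)) ts \<epsilon>"
  proof -
    have crossing: "\<epsilon> > 0" "char_gradient m ?W ?S (\<psi> ts, ts) = 0"
      using ch unfolding change_C_to_R_def by auto
    have "m * (riemann_invariant (- c) \<rho> u (\<psi> ts, ts))\<^sup>2 / 2 * ?\<beta> \<le> 0"
      using change(1)[OF ch] source[OF crossing] by linarith
    then show ?thesis using factor[OF crossing] by (metis mult_pos_pos not_le)
  qed
  show "?\<beta> \<ge> 0" if ch: "change_R_to_C (\<lambda>t. char_gradient m ?W ?S (\<psi> t, t)) ts \<epsilon>"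
  proof -
    have crossing: "\<epsilon> > 0" "char_gradient m ?W ?S (\<psi> ts, ts) = 0"
      using ch unfolding change_R_to_C_def by auto
    have "m * (riemann_invariant (- c) \<rho> u (\<psi> ts, ts))\<^sup>2 / 2 * ?\<beta> \<ge> 0"
      using change(2)[OF ch] source[OF crossing] by linarith
    then show ?thesis using factor[OF crossing] by (metis mult_pos_neg not_le)
  qed
qed

text \<open>\<open>c'\<close> is a separate parameter so that the instance for the 1-wave, \<open>c := - c\<close>, needs no
  rewriting of \<open>- (- c)\<close> in the hypotheses.\<close>

lemma euler3_no_wave_change:
  assumes E: "euler3_primitive m c \<Omega> \<rho> u" and "m > 0" and c': "c' = - c"
    and inward: "\<forall>z\<in>\<Omega>. riemann_invariant c \<rho> u z < 0 \<and> riemann_invariant c' \<rho> u z < 0"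
    and V: "\<forall>z\<in>\<Omega>. V z = riemann_invariant c \<rho> u z"
    and A: "\<forall>z\<in>\<Omega>. A z = char_gradient m (riemann_invariant c \<rho> u) (riemann_source c \<rho> u) z"
    and B: "\<forall>z\<in>\<Omega>. B z = char_gradient m (riemann_invariant c' \<rho> u) (riemann_source c' \<rho> u) z"
    and \<psi>: "char_curve \<Omega> V J r0 \<psi>" and J: "{ts - \<epsilon><..<ts + \<epsilon>} \<subseteq> J"
  shows "B (\<psi> ts, ts) > 0 \<Longrightarrow> \<not> change_C_to_R (\<lambda>t. A (\<psi> t, t)) ts \<epsilon>"
    and "B (\<psi> ts, ts) < 0 \<Longrightarrow> \<not> change_R_to_C (\<lambda>t. A (\<psi> t, t)) ts \<epsilon>"
proof -
  have along: "\<And>t. t \<in> {ts - \<epsilon><..<ts + \<epsilon>} \<Longrightarrow> (\<psi> t, t) \<in> \<Omega>"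
    using \<psi> J unfolding char_curve_def by auto
  have "char_curve \<Omega> (riemann_invariant c \<rho> u) J r0 \<psi>"
    using \<psi> V char_curve_cong by metis
  note change = euler3_change_along_char_curve[OF E \<open>m > 0\<close> inward[unfolded c'] this J]
  show "\<not> change_C_to_R (\<lambda>t. A (\<psi> t, t)) ts \<epsilon>" if "B (\<psi> ts, ts) > 0"
  proof
    assume "change_C_to_R (\<lambda>t. A (\<psi> t, t)) ts \<epsilon>"
    then have "\<epsilon> > 0" and "change_C_to_R (\<lambda>t. char_gradient m (riemann_invariant c \<rho> u) (riemann_source c \<rho> u) (\<psi> t, t)) ts \<epsilon>"
      using A along by (auto simp: change_C_to_R_def cong: change_C_to_R_cong)
    with change(1) show False using that B along unfolding c' by fastforce
  qed
  show "\<not> change_R_to_C (\<lambda>t. A (\<psi> t, t)) ts \<epsilon>" if "B (\<psi> ts, ts) < 0"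
  proof
    assume "change_R_to_C (\<lambda>t. A (\<psi> t, t)) ts \<epsilon>"
    then have "\<epsilon> > 0" and "change_R_to_C (\<lambda>t. char_gradient m (riemann_invariant c \<rho> u) (riemann_source c \<rho> u) (\<psi> t, t)) ts \<epsilon>"
      using A along by (auto simp: change_R_to_C_def cong: change_R_to_C_cong)
    with change(2) show False using that B along unfolding c' by fastforce
  qed
qed

lemma gamma3_riemann_quantities:
  fixes m :: nat
  assumes \<Omega>: "open \<Omega>" and pos: "\<forall>z\<in>\<Omega>. \<rho> z > 0"
    and sm: "smooth_on \<Omega> \<rho>" "smooth_on \<Omega> u" and c: "c = sqrt (3 * K)"
  shows "\<forall>z\<in>\<Omega>. c2 K 3 \<rho> u z = riemann_invariant c \<rho> u z"
    and "\<forall>z\<in>\<Omega>. c1 K 3 \<rho> u z = riemann_invariant (- c) \<rho> u z"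
    and "\<forall>z\<in>\<Omega>. alpha m K 3 \<rho> u z = char_gradient m (riemann_invariant c \<rho> u) (riemann_source c \<rho> u) z"
    and "\<forall>z\<in>\<Omega>. beta m K 3 \<rho> u z
      = char_gradient m (riemann_invariant (- c) \<rho> u) (riemann_source (- c) \<rho> u) z"
proof -
  have hh: "hh K 3 \<rho> w = c * \<rho> w" if "w \<in> \<Omega>" for w
    using bspec[OF pos that] by (simp add: hh_def c mult.commute)
  have pr_hh: "pr (hh K 3 \<rho>) z = c * pr \<rho> z"
    and pr_riemann: "pr (riemann_invariant c' \<rho> u) z = pr u z + c' * pr \<rho> z" if z: "z \<in> \<Omega>" for z c'
  proof -
    obtain x t where xt: "z = (x, t)" by fastforce
    have d: "\<rho> differentiable at (x, t)" "u differentiable at (x, t)"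
      using sm \<Omega> z smooth_on_differentiable_at unfolding xt by blast+
    have "pr (hh K 3 \<rho>) (x, t) = pr (\<lambda>w. c * \<rho> w) (x, t)"
      using \<Omega> z hh unfolding xt by (intro pr_eq_on_open) auto
    also have "\<dots> = c * pr \<rho> (x, t)"
      using d by (intro pr_eqI) (auto intro!: derivative_eq_intros has_real_derivative_pr)
    finally show "pr (hh K 3 \<rho>) z = c * pr \<rho> z" unfolding xt .
    show "pr (riemann_invariant c' \<rho> u) z = pr u z + c' * pr \<rho> z"
      unfolding riemann_invariant_def[abs_def] xt by (rule pr_add_scaled[OF d(2,1)])
  qed
  show "\<forall>z\<in>\<Omega>. c2 K 3 \<rho> u z = riemann_invariant c \<rho> u z"
    "\<forall>z\<in>\<Omega>. c1 K 3 \<rho> u z = riemann_invariant (- c) \<rho> u z"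
    using hh by (simp_all add: c1_def c2_def riemann_invariant_def)
  show "\<forall>z\<in>\<Omega>. alpha m K 3 \<rho> u z = char_gradient m (riemann_invariant c \<rho> u) (riemann_source c \<rho> u) z"
    "\<forall>z\<in>\<Omega>. beta m K 3 \<rho> u z
      = char_gradient m (riemann_invariant (- c) \<rho> u) (riemann_source (- c) \<rho> u) z"
    using hh pr_hh pr_riemann
    by (simp_all add: alpha_def beta_def char_gradient_def c1_def c2_def riemann_invariant_def
        riemann_source_def mult.assoc)
qed

theorem mainTheorem5:
  fixes m :: nat and K \<gamma> :: real and \<Omega> :: "(real \<times> real) set"
    and \<rho> u :: "real \<times> real \<Rightarrow> real"
  assumes m: "m \<in> {1, 2}" and K: "K > 0" and g3: "\<gamma> = 3"
    and sol: "euler_solution m K \<gamma> \<Omega> \<rho> u"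
    and super: "\<forall>z\<in>\<Omega>. c1 K \<gamma> \<rho> u z < c2 K \<gamma> \<rho> u z \<and> c2 K \<gamma> \<rho> u z < 0"
  shows
    "(\<forall>J r0 \<psi> ts \<epsilon>. char_curve \<Omega> (c2 K \<gamma> \<rho> u) J r0 \<psi> \<and> {ts - \<epsilon><..<ts + \<epsilon>} \<subseteq> J
        \<and> beta m K \<gamma> \<rho> u (\<psi> ts, ts) > 0
        \<longrightarrow> \<not> change_C_to_R (\<lambda>t. alpha m K \<gamma> \<rho> u (\<psi> t, t)) ts \<epsilon>)
   \<and> (\<forall>J r0 \<xi> ts \<epsilon>. char_curve \<Omega> (c1 K \<gamma> \<rho> u) J r0 \<xi> \<and> {ts - \<epsilon><..<ts + \<epsilon>} \<subseteq> J
        \<and> alpha m K \<gamma> \<rho> u (\<xi> ts, ts) > 0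
        \<longrightarrow> \<not> change_C_to_R (\<lambda>t. beta m K \<gamma> \<rho> u (\<xi> t, t)) ts \<epsilon>)
   \<and> (\<forall>J r0 \<psi> ts \<epsilon>. char_curve \<Omega> (c2 K \<gamma> \<rho> u) J r0 \<psi> \<and> {ts - \<epsilon><..<ts + \<epsilon>} \<subseteq> J
        \<and> beta m K \<gamma> \<rho> u (\<psi> ts, ts) < 0
        \<longrightarrow> \<not> change_R_to_C (\<lambda>t. alpha m K \<gamma> \<rho> u (\<psi> t, t)) ts \<epsilon>)
   \<and> (\<forall>J r0 \<xi> ts \<epsilon>. char_curve \<Omega> (c1 K \<gamma> \<rho> u) J r0 \<xi> \<and> {ts - \<epsilon><..<ts + \<epsilon>} \<subseteq> J
        \<and> alpha m K \<gamma> \<rho> u (\<xi> ts, ts) < 0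
        \<longrightarrow> \<not> change_R_to_C (\<lambda>t. beta m K \<gamma> \<rho> u (\<xi> t, t)) ts \<epsilon>)"
proof -
  define c where "c = sqrt (3 * K)"
  have sol3: "euler_solution m K 3 \<Omega> \<rho> u" using sol g3 by simp
  have E: "euler3_primitive m c \<Omega> \<rho> u" "euler3_primitive m (- c) \<Omega> \<rho> u"
    using K by (auto intro!: euler_solution_imp_euler3_primitive[OF sol3] simp: c_def)
  have "open \<Omega>" and pos: "\<forall>z\<in>\<Omega>. \<rho> z > 0" and "smooth_on \<Omega> \<rho>" "smooth_on \<Omega> u"
    using sol unfolding euler_solution_def by auto
  note riemann = gamma3_riemann_quantities[OF \<open>open \<Omega>\<close> pos \<open>smooth_on \<Omega> \<rho>\<close> \<open>smooth_on \<Omega> u\<close> c_def]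
  have inward: "\<forall>z\<in>\<Omega>. riemann_invariant c \<rho> u z < 0 \<and> riemann_invariant (- c) \<rho> u z < 0"
    using super riemann unfolding g3 by auto
  have "real m > 0" using m by auto
  have inward': "\<forall>z\<in>\<Omega>. riemann_invariant (- c) \<rho> u z < 0 \<and> riemann_invariant c \<rho> u z < 0"
    using inward by blast
  note no_change_2 = euler3_no_wave_change[OF E(1) \<open>real m > 0\<close> refl inward riemann(1,3,4)]
  note no_change_1 = euler3_no_wave_change[OF E(2) \<open>real m > 0\<close> minus_minus[symmetric] inward' riemann(2,4,3)]
  show ?thesis
    unfolding g3 by (intro conjI allI impI; elim conjE; rule no_change_1 no_change_2; assumption)
qed

end
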